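(* Let $G=(V,E)$ be a connected undirected graph on $n$ nodes with Laplacian $L$, let $\kappa_1,\dots,\kappa_n>0$, $D_\kappa=\mathrm{diag}(\kappa_1,\dots,\kappa_n)$, and for $S\subseteq V$ let $Q_S=L+D_\kappa D_S$, where $D_S$ is the diagonal $0/1$ matrix with $(D_S)_{ii}=1$ iff $i\in S$ (write $Q_v$ for $Q_{\{v\}}$). For nonempty $S$ let $H(S)=\frac12\mathrm{tr}(Q_S^{-1})$. Let $k\ge1$ be an integer, let $\hat H=\min\{H(S): S\subseteq V,\ S\neq\emptyset,\ |S|\le k\}$, and let $B=\max_{v\in V}\mathrm{tr}(Q_v^{-1})$. Let $S_s$ be the output of the following Swap Algorithm: start from an arbitrary set $S\subseteq V$ with $|S|=k$; while there exist $i\in S$ and $j\in V\setminus S$ with $\mathrm{tr}(Q_{(S\cup\{j\})\setminus\{i\}}^{-1})<\mathrm{tr}(Q_S^{-1})$, replace $S$ by $(S\cup\{j\})\setminus\{i\}$; when no such pair exists, return $S$. Then $$H(S_s)\le\left(1-\frac{k-1}{2k-1}\right)\hat H+B\,\frac{k-1}{2k-1}.$$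
   Context: For nonempty $S$, $Q_S$ is positive definite. $H(S)$ is the total steady-state variance of the leader–follower consensus dynamics $\dot x=-(L+D_\kappa D_S)x+w$ with white noise $w$, where $S$ is the set of leaders; the $k$-leader selection problem asks to minimize $H(S)$ subject to $|S|\le k$. *)

theory Defs
  imports "HOL-Analysis.Analysis"
begin

text \<open>Nodes are the elements of a finite type 'n (so n = CARD('n)).
  The undirected simple graph is given by a symmetric irreflexive adjacency relation E.\<close>

definition undirected_graph :: "('n \<Rightarrow> 'n \<Rightarrow> bool) \<Rightarrow> bool" where
  "undirected_graph E \<longleftrightarrow> (\<forall>i j. E i j \<longrightarrow> E j i) \<and> (\<forall>i. \<not> E i i)"

definition connected_graph :: "('n \<Rightarrow> 'n \<Rightarrow> bool) \<Rightarrow> bool" where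
  "connected_graph E \<longleftrightarrow> (\<forall>i j. E\<^sup>*\<^sup>* i j)"

definition laplacian :: "('n::finite \<Rightarrow> 'n \<Rightarrow> bool) \<Rightarrow> real^'n^'n" where
  "laplacian E = (\<chi> i j. (if i = j then real (card {l. E i l}) else 0) - (if E i j then 1 else 0))"

definition diag_sel :: "'n set \<Rightarrow> real^'n^'n" where
  "diag_sel S = (\<chi> i j. if i = j \<and> i \<in> S then 1 else 0)"

definition diag_kappa :: "('n \<Rightarrow> real) \<Rightarrow> real^'n^'n" where
  "diag_kappa \<kappa> = (\<chi> i j. if i = j then \<kappa> i else 0)"

definition QS :: "('n::finite \<Rightarrow> 'n \<Rightarrow> bool) \<Rightarrow> ('n \<Rightarrow> real) \<Rightarrow> 'n set \<Rightarrow> real^'n^'n" where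
  "QS E \<kappa> S = laplacian E + diag_kappa \<kappa> ** diag_sel S"

definition Hval :: "('n::finite \<Rightarrow> 'n \<Rightarrow> bool) \<Rightarrow> ('n \<Rightarrow> real) \<Rightarrow> 'n set \<Rightarrow> real" where
  "Hval E \<kappa> S = trace (matrix_inv (QS E \<kappa> S)) / 2"

definition swap_step :: "('n::finite \<Rightarrow> 'n \<Rightarrow> bool) \<Rightarrow> ('n \<Rightarrow> real) \<Rightarrow> 'n set \<Rightarrow> 'n set \<Rightarrow> bool" where
  "swap_step E \<kappa> S S' \<longleftrightarrow> (\<exists>i\<in>S. \<exists>j. j \<notin> S \<and> S' = (S \<union> {j}) - {i} \<and>
      trace (matrix_inv (QS E \<kappa> S')) < trace (matrix_inv (QS E \<kappa> S)))"

definition swap_output :: "('n::finite \<Rightarrow> 'n \<Rightarrow> bool) \<Rightarrow> ('n \<Rightarrow> real) \<Rightarrow> nat \<Rightarrow> 'n set \<Rightarrow> bool" where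
  "swap_output E \<kappa> k S \<longleftrightarrow> (\<exists>S0. card S0 = k \<and> (swap_step E \<kappa>)\<^sup>*\<^sup>* S0 S) \<and>
      \<not> (\<exists>S'. swap_step E \<kappa> S S')"

end

theory Submission
  imports Defs
begin

text \<open>Write \<open>f S = tr (Q\<^sub>S\<^sup>-\<^sup>1)\<close>. A discrete minimum principle for \<open>Q\<^sub>S\<close> makes the columns
  \<open>a = Q\<^sub>S\<^sup>-\<^sup>1 e\<^sub>x\<close> nonnegative and, normalised by \<open>a\<^sub>x\<close>, pointwise decreasing in \<open>S\<close>.
  By Sherman--Morrison, adding a leader \<open>x\<close> lowers \<open>f\<close> by \<open>\<kappa>\<^sub>x \<parallel>a\<parallel>\<^sup>2 / (1 + \<kappa>\<^sub>x a\<^sub>x)\<close>,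
  so \<open>f\<close> is nonincreasing and supermodular.
  Now let \<open>S\<close> be swap-optimal with \<open>|S| = k \<ge> 2\<close>, \<open>O\<close> optimal, \<open>s \<in> S\<close> and \<open>u \<in> O - S\<close>.
  Swap-optimality, supermodularity and \<open>f (S - s) \<le> B\<close> give
  \<open>f S \<le> f (S - s + u) \<le> f (S - s) - (f S - f (S + u)) \<le> B - f S + f (S + u)\<close>;
  summing over \<open>u\<close> and using supermodularity once more along \<open>O - S\<close> yields
  \<open>(m + 1) f S \<le> m B + f O\<close> with \<open>m = |O - S| \<le> k\<close>, which rearranges to the claim.
  For \<open>k = 1\<close> swap-optimality alone gives \<open>f S \<le> f O\<close>.\<close>

lemma QS_nth:
  "QS E \<kappa> S $ i $ j = (if i = j then real (card {l. E i l}) else 0) - (if E i j then 1 else 0)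
     + (if i = j \<and> i \<in> S then \<kappa> i else 0)"
proof -
  have "(diag_kappa \<kappa> ** diag_sel S) $ i $ j = (\<Sum>l\<in>UNIV. diag_kappa \<kappa> $ i $ l * diag_sel S $ l $ j)"
    by (simp add: matrix_matrix_mult_def)
  also have "\<dots> = (\<Sum>l\<in>UNIV. if i = l then \<kappa> i * (if l = j \<and> l \<in> S then 1 else 0) else 0)"
    by (rule sum.cong) (auto simp: diag_kappa_def diag_sel_def)
  also have "\<dots> = (if i = j \<and> i \<in> S then \<kappa> i else 0)"
    by (auto simp: sum.delta')
  finally show ?thesis
    unfolding QS_def laplacian_def by simp
qed

lemma QS_mult_vec_nth:
  "(QS E \<kappa> S *v y) $ i = (\<Sum>j\<in>{l. E i l}. y $ i - y $ j) + (if i \<in> S then \<kappa> i * y $ i else 0)"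
proof -
  have "(QS E \<kappa> S *v y) $ i = (\<Sum>j\<in>UNIV. QS E \<kappa> S $ i $ j * y $ j)"
    by (simp add: matrix_vector_mult_def)
  also have "\<dots> = (\<Sum>j\<in>UNIV. (if i = j then real (card {l. E i l}) * y $ j else 0)
      - (if E i j then y $ j else 0) + (if i = j then (if i \<in> S then \<kappa> i * y $ j else 0) else 0))"
    by (rule sum.cong) (simp_all add: QS_nth algebra_simps)
  also have "\<dots> = (\<Sum>j\<in>UNIV. if i = j then real (card {l. E i l}) * y $ j else 0)
      - (\<Sum>j\<in>UNIV. if E i j then y $ j else 0)
      + (\<Sum>j\<in>UNIV. if i = j then (if i \<in> S then \<kappa> i * y $ j else 0) else 0)"
    by (simp add: sum.distrib sum_subtractf)
  also have "\<dots> = real (card {l. E i l}) * y $ i - (\<Sum>j\<in>{l. E i l}. y $ j)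
      + (if i \<in> S then \<kappa> i * y $ i else 0)"
    by (simp add: sum.If_cases)
  also have "\<dots> = (\<Sum>j\<in>{l. E i l}. y $ i - y $ j) + (if i \<in> S then \<kappa> i * y $ i else 0)"
    by (simp add: sum_subtractf)
  finally show ?thesis .
qed

lemma QS_mult_vec_nth_mono:
  "S \<subseteq> T \<Longrightarrow>
   (QS E \<kappa> T *v y) $ i = (QS E \<kappa> S *v y) $ i + (if i \<in> T - S then \<kappa> i * y $ i else 0)"
  by (auto simp: QS_mult_vec_nth)

lemma transpose_QS: "undirected_graph E \<Longrightarrow> transpose (QS E \<kappa> S) = QS E \<kappa> S"
  by (auto simp: undirected_graph_def vec_eq_iff transpose_def QS_nth)

lemma square_div_one_plus_mono:
  fixes c s t :: real
  assumes "0 < c" "0 < s" "s \<le> t"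
  shows "c * s\<^sup>2 / (1 + c * s) \<le> c * t\<^sup>2 / (1 + c * t)"
proof -
  have "s\<^sup>2 \<le> t\<^sup>2"
    using assms by (simp add: power_mono)
  moreover have "s\<^sup>2 * t \<le> t\<^sup>2 * s"
    using assms by (simp add: power2_eq_square mult_left_mono mult_right_mono)
  ultimately
  have "c * (s\<^sup>2 + c * (s\<^sup>2 * t)) \<le> c * (t\<^sup>2 + c * (t\<^sup>2 * s))"
    using assms by (simp add: add_mono mult_left_mono)
  then have "c * s\<^sup>2 * (1 + c * t) \<le> c * t\<^sup>2 * (1 + c * s)"
    by (simp add: algebra_simps)
  then show ?thesis
    using assms by (simp add: divide_simps add_pos_pos)
qed

lemma swap_ratio_bound:
  fixes K m fS fO B :: real
  assumes K: "2 \<le> K" and mK: "m \<le> K" and fO: "0 \<le> fO" and fS: "0 \<le> fS" and fSB: "fS \<le> B"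
    and h: "(m + 1) * fS \<le> m * B + fO"
  shows "fS / 2 \<le> (1 - (K - 1) / (2 * K - 1)) * (fO / 2) + B * ((K - 1) / (2 * K - 1))"
proof -
  have "(K - m) * fS \<le> (K - m) * B"
    using mK fSB by (simp add: mult_left_mono)
  with h have hK: "(K + 1) * fS \<le> K * B + fO"
    by (simp add: algebra_simps)
  have "(K + 1) * ((2 * K - 1) * fS) \<le> (2 * K - 1) * (K * B + fO)"
    using hK K by (simp add: mult_left_mono mult.left_commute)
  also have "\<dots> \<le> (K + 1) * (K * fO + 2 * (K - 1) * B)"
  proof -
    have "K \<le> K * K"
      using K by (simp add: mult_le_cancel_left1)
    then have "0 \<le> (K * K - K + 1) * fO + (K - 2) * B"
      using K fO fS fSB by (intro add_nonneg_nonneg mult_nonneg_nonneg) auto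
    then show ?thesis
      by (simp add: algebra_simps)
  qed
  finally have "(2 * K - 1) * fS \<le> K * fO + 2 * (K - 1) * B"
    using K by (simp add: mult_le_cancel_left_pos)
  moreover have "(1 - (K - 1) / (2 * K - 1)) * (fO / 2) + B * ((K - 1) / (2 * K - 1))
      = (K * fO + 2 * (K - 1) * B) / (2 * (2 * K - 1))"
  proof -
    \<comment> \<open>abstracting the denominator keeps \<open>field_simps\<close> from expanding \<open>2 * K - 1\<close>\<close>
    have "(1 - (K - 1) / D) * (fO / 2) + B * ((K - 1) / D)
        = ((D - (K - 1)) * fO + 2 * (K - 1) * B) / (2 * D)" if "D \<noteq> 0" for D
      using that by (simp add: field_simps)
    from this[of "2 * K - 1"] K show ?thesis
      by simp
  qed
  ultimately show ?thesis
    using K by (simp add: pos_le_divide_eq algebra_simps)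
qed

locale grounded_laplacian =
  fixes E :: "'n::finite \<Rightarrow> 'n \<Rightarrow> bool" and \<kappa> :: "'n \<Rightarrow> real"
  assumes undirected: "undirected_graph E" and connected: "connected_graph E"
    and kappa_pos: "\<And>i. 0 < \<kappa> i"
begin

text \<open>At a negative minimum the row of \<open>Q\<^sub>S\<close> is \<open>\<le> 0\<close> with equality only if the node is a
  follower whose neighbours are minimisers as well; by connectivity the minimum spreads to a leader.\<close>

lemma min_principle:
  assumes S: "S \<noteq> {}" and super: "\<And>j. 0 \<le> (QS E \<kappa> S *v y) $ j \<or> 0 \<le> y $ j"
  shows "0 \<le> y $ i"
proof (rule ccontr)
  assume "\<not> 0 \<le> y $ i"
  define m where "m = Min (range (\<lambda>j. y $ j))"
  have m_le: "m \<le> y $ j" for j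
    unfolding m_def by (rule Min_le) auto
  have "m \<in> range (\<lambda>j. y $ j)"
    unfolding m_def by (rule Min_in) auto
  then obtain i0 where i0: "y $ i0 = m"
    by auto
  have m_neg: "m < 0"
    using m_le[of i] \<open>\<not> 0 \<le> y $ i\<close> by simp
  have spread: "a \<notin> S \<and> (\<forall>b. E a b \<longrightarrow> y $ b = m)" if ya: "y $ a = m" for a
  proof -
    have row: "0 \<le> (\<Sum>j\<in>{l. E a l}. y $ a - y $ j) + (if a \<in> S then \<kappa> a * y $ a else 0)"
      using super[of a] ya m_neg by (auto simp: QS_mult_vec_nth)
    have diff: "(\<Sum>j\<in>{l. E a l}. y $ a - y $ j) \<le> 0"
      by (rule sum_nonpos) (use m_le ya in auto)
    have leader: "(if a \<in> S then \<kappa> a * y $ a else 0) \<le> 0"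
      using kappa_pos[of a] ya m_neg by (simp add: mult_pos_neg less_imp_le)
    have "(\<Sum>j\<in>{l. E a l}. y $ j - y $ a) = 0"
      using row diff leader by (simp add: sum_subtractf)
    then have "\<forall>j\<in>{l. E a l}. y $ j - y $ a = 0"
      by (subst (asm) sum_nonneg_eq_0_iff) (use m_le ya in auto)
    moreover have "(if a \<in> S then \<kappa> a * y $ a else 0) = 0"
      using row diff leader by linarith
    ultimately show ?thesis
      using kappa_pos[of a] ya m_neg by (auto split: if_splits)
  qed
  have all_min: "y $ j = m" for j
  proof -
    have "E\<^sup>*\<^sup>* i0 j"
      using connected unfolding connected_graph_def by blast
    then show ?thesis
      by (induction rule: rtranclp_induct) (use i0 spread in blast)+
  qed
  obtain s where "s \<in> S"
    using S by blast
  then show False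
    using spread[OF all_min[of s]] by blast
qed

lemma QS_invertible:
  assumes "S \<noteq> {}"
  shows "invertible (QS E \<kappa> S)"
  unfolding invertible_left_inverse matrix_left_invertible_ker
proof (intro allI impI)
  fix y assume y: "QS E \<kappa> S *v y = 0"
  moreover have "QS E \<kappa> S *v (- y) = 0"
    using matrix_vector_mult_diff_distrib[of "QS E \<kappa> S" 0 y] y by simp
  ultimately have "0 \<le> y $ i" and "0 \<le> (- y) $ i" for i
    by (metis min_principle[OF assms] order.refl zero_index)+
  then show "y = 0"
    by (simp add: vec_eq_iff order_antisym)
qed

lemma QS_matrix_inv:
  assumes "S \<noteq> {}"
  shows "QS E \<kappa> S ** matrix_inv (QS E \<kappa> S) = mat 1" "matrix_inv (QS E \<kappa> S) ** QS E \<kappa> S = mat 1"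
  using someI_ex[OF QS_invertible[OF assms, unfolded invertible_def]]
  unfolding matrix_inv_def by auto

definition solve :: "'n set \<Rightarrow> real^'n \<Rightarrow> real^'n" where
  "solve S b = matrix_inv (QS E \<kappa> S) *v b"

definition trace_inv :: "'n set \<Rightarrow> real" where
  "trace_inv S = trace (matrix_inv (QS E \<kappa> S))"

lemma QS_solve: "S \<noteq> {} \<Longrightarrow> QS E \<kappa> S *v solve S b = b"
  unfolding solve_def by (simp add: matrix_vector_mul_assoc QS_matrix_inv)

lemma solve_unique: "S \<noteq> {} \<Longrightarrow> QS E \<kappa> S *v y = b \<Longrightarrow> solve S b = y"
  unfolding solve_def by (metis matrix_vector_mul_assoc QS_matrix_inv(2) matrix_vector_mul_lid)

lemma solve_nonneg:
  assumes "S \<noteq> {}" and "\<And>j. 0 \<le> b $ j"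
  shows "0 \<le> solve S b $ i"
  by (rule min_principle[OF assms(1)]) (simp add: QS_solve assms)

lemma solve_antimono:
  assumes S: "S \<noteq> {}" and ST: "S \<subseteq> T" and b: "\<And>j. 0 \<le> b $ j"
  shows "solve T b $ i \<le> solve S b $ i"
proof -
  have T: "T \<noteq> {}"
    using S ST by auto
  have "(QS E \<kappa> T *v (solve S b - solve T b)) $ j = (if j \<in> T - S then \<kappa> j * solve S b $ j else 0)"
    for j
  proof -
    have "(QS E \<kappa> T *v (solve S b - solve T b)) $ j = (QS E \<kappa> T *v solve S b) $ j - b $ j"
      by (simp add: matrix_vector_mult_diff_distrib QS_solve[OF T])
    also have "\<dots> = (if j \<in> T - S then \<kappa> j * solve S b $ j else 0)"
      using QS_mult_vec_nth_mono[OF ST, of E \<kappa> "solve S b" j] by (simp add: QS_solve[OF S])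
    finally show ?thesis .
  qed
  then have "0 \<le> (solve S b - solve T b) $ i"
    by (intro min_principle[OF T]) (simp add: kappa_pos less_imp_le solve_nonneg[OF S b])
  then show ?thesis
    by simp
qed

lemma axis_one_nonneg: "0 \<le> axis i (1::real) $ j"
  by (simp add: axis_def)

lemma trace_inv_eq_sum: "trace_inv S = (\<Sum>i\<in>UNIV. solve S (axis i 1) $ i)"
  unfolding trace_inv_def trace_def solve_def by (simp add: matrix_vector_mult_basis column_def)

lemma trace_inv_nonneg: "S \<noteq> {} \<Longrightarrow> 0 \<le> trace_inv S"
  unfolding trace_inv_eq_sum by (intro sum_nonneg solve_nonneg axis_one_nonneg)

lemma trace_inv_antimono: "S \<noteq> {} \<Longrightarrow> S \<subseteq> T \<Longrightarrow> trace_inv T \<le> trace_inv S"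
  unfolding trace_inv_eq_sum by (intro sum_mono solve_antimono axis_one_nonneg)

lemma solve_axis_sym:
  assumes "S \<noteq> {}"
  shows "solve S (axis i 1) $ x = solve S (axis x 1) $ i"
proof -
  let ?Q = "QS E \<kappa> S" and ?u = "solve S (axis i 1)" and ?v = "solve S (axis x 1)"
  have "?u $ x = inner ?u (?Q *v ?v)"
    by (simp add: QS_solve[OF assms] cart_eq_inner_axis)
  also have "\<dots> = inner (?Q *v ?u) ?v"
    by (metis dot_lmul_matrix transpose_matrix_vector transpose_QS[OF undirected])
  also have "\<dots> = ?v $ i"
    by (simp add: QS_solve[OF assms] cart_eq_inner_axis inner_commute)
  finally show ?thesis .
qed

lemma solve_axis_self_pos:
  assumes S: "S \<noteq> {}" and x: "x \<notin> S"
  shows "0 < solve S (axis x 1) $ x"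
proof (rule ccontr)
  let ?a = "solve S (axis x 1)"
  assume "\<not> 0 < ?a $ x"
  moreover have nonneg: "0 \<le> ?a $ j" for j
    by (intro solve_nonneg[OF S] axis_one_nonneg)
  ultimately have "?a $ x = 0"
    by (simp add: order.antisym)
  then have "(\<Sum>j\<in>{l. E x l}. ?a $ x - ?a $ j) \<le> 0"
    using nonneg by (intro sum_nonpos) simp
  moreover have "(QS E \<kappa> S *v ?a) $ x = 1"
    by (simp add: QS_solve[OF S])
  moreover have "(QS E \<kappa> S *v ?a) $ x = (\<Sum>j\<in>{l. E x l}. ?a $ x - ?a $ j)"
    using x by (simp add: QS_mult_vec_nth)
  ultimately show False
    by linarith
qed

text \<open>Sherman--Morrison: \<open>Q\<^bsub>S+x\<^esub> = Q\<^sub>S + \<kappa>\<^sub>x e\<^sub>x e\<^sub>x\<^sup>T\<close> is a rank-one update.\<close>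

lemma solve_insert:
  assumes A: "A \<noteq> {}" and x: "x \<notin> A"
  shows "solve (insert x A) b
    = solve A b - (\<kappa> x * solve A b $ x / (1 + \<kappa> x * solve A (axis x 1) $ x)) *s solve A (axis x 1)"
proof (rule solve_unique)
  let ?a = "solve A (axis x 1)" and ?y = "solve A b"
  define c where "c = \<kappa> x * ?y $ x / (1 + \<kappa> x * ?a $ x)"
  have "0 < 1 + \<kappa> x * ?a $ x"
    using solve_axis_self_pos[OF A x] kappa_pos[of x] by (simp add: add_pos_pos)
  then have c: "\<kappa> x * (?y $ x - c * ?a $ x) = c"
    unfolding c_def by (simp add: field_simps)
  have "(QS E \<kappa> (insert x A) *v (?y - c *s ?a)) $ i = b $ i" for i
  proof -
    have "QS E \<kappa> A *v (?y - c *s ?a) = b - c *s axis x 1"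
      by (simp add: matrix_vector_mult_diff_distrib scalar_mult_eq_scaleR matrix_vector_mult_scaleR
          QS_solve[OF A])
    then have "(QS E \<kappa> (insert x A) *v (?y - c *s ?a)) $ i
        = (b - c *s axis x 1) $ i + (if i = x then \<kappa> x * (?y $ x - c * ?a $ x) else 0)"
      using QS_mult_vec_nth_mono[OF subset_insertI, where y = "?y - c *s ?a" and i = i] x by simp
    then show ?thesis
      using c by (simp add: axis_def)
  qed
  then show "QS E \<kappa> (insert x A) *v (?y - c *s ?a) = b"
    by (simp add: vec_eq_iff)
qed simp

definition trace_gain :: "'n set \<Rightarrow> 'n \<Rightarrow> real" where
  "trace_gain A x = \<kappa> x * (\<Sum>i\<in>UNIV. (solve A (axis x 1) $ i)\<^sup>2) / (1 + \<kappa> x * solve A (axis x 1) $ x)"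

lemma trace_inv_insert:
  assumes A: "A \<noteq> {}" and x: "x \<notin> A"
  shows "trace_inv A - trace_inv (insert x A) = trace_gain A x"
proof -
  let ?a = "solve A (axis x 1)"
  have "solve A (axis i 1) $ i - solve (insert x A) (axis i 1) $ i
      = \<kappa> x * (?a $ i)\<^sup>2 / (1 + \<kappa> x * ?a $ x)" for i
    using solve_insert[OF A x, of "axis i 1"] solve_axis_sym[OF A, of i x] by (simp add: power2_eq_square)
  then have "trace_inv A - trace_inv (insert x A) = (\<Sum>i\<in>UNIV. \<kappa> x * (?a $ i)\<^sup>2 / (1 + \<kappa> x * ?a $ x))"
    unfolding trace_inv_eq_sum sum_subtractf[symmetric] by simp
  then show ?thesis
    unfolding trace_gain_def by (simp add: sum_divide_distrib sum_distrib_left)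
qed

lemma solve_axis_ratio_antimono:
  assumes A: "A \<noteq> {}" and AB: "A \<subseteq> B" and x: "x \<notin> B"
  shows "solve B (axis x 1) $ i / solve B (axis x 1) $ x \<le> solve A (axis x 1) $ i / solve A (axis x 1) $ x"
proof -
  let ?a = "solve A (axis x 1)" and ?b = "solve B (axis x 1)"
  let ?z = "(1 / ?a $ x) *s ?a - (1 / ?b $ x) *s ?b"
  have B: "B \<noteq> {}"
    using A AB by auto
  have ax: "0 < ?a $ x" and bx: "0 < ?b $ x"
    using solve_axis_self_pos[OF A] solve_axis_self_pos[OF B x] x AB by auto
  have "0 \<le> (QS E \<kappa> B *v ?z) $ j \<or> 0 \<le> ?z $ j" for j
  proof (cases "j = x")
    case True
    then show ?thesis
      using ax bx by simp
  next
    case False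
    then have "(QS E \<kappa> B *v ?z) $ j = (1 / ?a $ x) * (if j \<in> B - A then \<kappa> j * ?a $ j else 0)"
      using QS_mult_vec_nth_mono[OF AB, of E \<kappa> ?a j]
      by (simp add: matrix_vector_mult_diff_distrib scalar_mult_eq_scaleR matrix_vector_mult_scaleR
          QS_solve A B axis_def)
    moreover have "0 \<le> ?a $ j"
      by (intro solve_nonneg[OF A] axis_one_nonneg)
    ultimately show ?thesis
      using ax kappa_pos[of j] by simp
  qed
  then have "0 \<le> ?z $ i"
    by (rule min_principle[OF B])
  then show ?thesis
    by simp
qed

lemma trace_gain_eq_ratio:
  assumes "0 < solve C (axis x 1) $ x"
  shows "trace_gain C x = \<kappa> x * (solve C (axis x 1) $ x)\<^sup>2 / (1 + \<kappa> x * solve C (axis x 1) $ x)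
    * (\<Sum>i\<in>UNIV. (solve C (axis x 1) $ i / solve C (axis x 1) $ x)\<^sup>2)"
  using assms unfolding trace_gain_def by (simp add: power_divide sum_divide_distrib[symmetric])

lemma trace_gain_antimono:
  assumes A: "A \<noteq> {}" and AB: "A \<subseteq> B" and x: "x \<notin> B"
  shows "trace_gain B x \<le> trace_gain A x"
proof -
  let ?a = "solve A (axis x 1)" and ?b = "solve B (axis x 1)"
  have B: "B \<noteq> {}"
    using A AB by auto
  have ax: "0 < ?a $ x" and bx: "0 < ?b $ x"
    using solve_axis_self_pos[OF A] solve_axis_self_pos[OF B x] x AB by auto
  have "\<kappa> x * (?b $ x)\<^sup>2 / (1 + \<kappa> x * ?b $ x) \<le> \<kappa> x * (?a $ x)\<^sup>2 / (1 + \<kappa> x * ?a $ x)"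
    using square_div_one_plus_mono[OF kappa_pos bx] solve_antimono[OF A AB axis_one_nonneg] by blast
  moreover have "(\<Sum>i\<in>UNIV. (?b $ i / ?b $ x)\<^sup>2) \<le> (\<Sum>i\<in>UNIV. (?a $ i / ?a $ x)\<^sup>2)"
  proof (rule sum_mono)
    fix i
    have "0 \<le> ?b $ i / ?b $ x"
      using bx solve_nonneg[OF B axis_one_nonneg] by simp
    then show "(?b $ i / ?b $ x)\<^sup>2 \<le> (?a $ i / ?a $ x)\<^sup>2"
      using solve_axis_ratio_antimono[OF A AB x, of i] by (simp add: power_mono)
  qed
  moreover have "0 \<le> \<kappa> x * (?a $ x)\<^sup>2 / (1 + \<kappa> x * ?a $ x)"
    using kappa_pos[of x] ax by (simp add: add_pos_pos)
  ultimately show ?thesis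
    unfolding trace_gain_eq_ratio[OF ax] trace_gain_eq_ratio[OF bx] by (intro mult_mono sum_nonneg) auto
qed

lemma trace_inv_supermodular:
  assumes A: "A \<noteq> {}" and AB: "A \<subseteq> B" and x: "x \<notin> B"
  shows "trace_inv B - trace_inv (insert x B) \<le> trace_inv A - trace_inv (insert x A)"
proof -
  have "B \<noteq> {}" and "x \<notin> A"
    using assms by auto
  then show ?thesis
    using trace_gain_antimono[OF assms] trace_inv_insert[OF A] trace_inv_insert[of B x] x by simp
qed

lemma trace_inv_union_decrease_le:
  assumes S: "S \<noteq> {}" and disj: "S \<inter> T = {}"
  shows "trace_inv S - trace_inv (S \<union> T) \<le> (\<Sum>u\<in>T. trace_inv S - trace_inv (insert u S))"
proof -
  have "finite T"
    by simp
  then show ?thesis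
    using disj
  proof (induction T rule: finite_induct)
    case empty
    then show ?case
      by simp
  next
    case (insert t T)
    have "trace_inv S - trace_inv (S \<union> insert t T)
        = (trace_inv S - trace_inv (S \<union> T)) + (trace_inv (S \<union> T) - trace_inv (insert t (S \<union> T)))"
      by simp
    also have "\<dots> \<le> (\<Sum>u\<in>T. trace_inv S - trace_inv (insert u S)) + (trace_inv S - trace_inv (insert t S))"
      using insert trace_inv_supermodular[OF S, of "S \<union> T" t] by (intro add_mono) auto
    finally show ?case
      using insert by simp
  qed
qed

definition swap_optimal :: "'n set \<Rightarrow> bool" where
  "swap_optimal S \<longleftrightarrow> (\<forall>s\<in>S. \<forall>u. u \<notin> S \<longrightarrow> trace_inv S \<le> trace_inv (S \<union> {u} - {s}))"

lemma swap_output_swap_optimal: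
  assumes "swap_output E \<kappa> k S"
  shows "swap_optimal S"
  unfolding swap_optimal_def
proof (intro ballI allI impI, rule ccontr)
  fix s u
  assume "s \<in> S" "u \<notin> S" "\<not> trace_inv S \<le> trace_inv (S \<union> {u} - {s})"
  then have "swap_step E \<kappa> S (S \<union> {u} - {s})"
    unfolding swap_step_def trace_inv_def by auto
  with assms show False
    unfolding swap_output_def by blast
qed

lemma swap_optimal_bound:
  assumes card: "2 \<le> card S" and swap_opt: "swap_optimal S"
    and Opt: "Opt \<noteq> {}" and B: "\<And>v. trace_inv {v} \<le> B"
  shows "(real (card (Opt - S)) + 1) * trace_inv S \<le> real (card (Opt - S)) * B + trace_inv Opt"
proof -
  let ?T = "Opt - S" and ?m = "real (card (Opt - S))"
  have S: "S \<noteq> {}"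
    using card by auto
  then obtain s where s: "s \<in> S"
    by blast
  let ?A = "S - {s}"
  have A: "?A \<noteq> {}"
  proof
    assume "?A = {}"
    then have "S = {s}"
      using s by auto
    then show False
      using card by simp
  qed
  then obtain v where v: "v \<in> ?A"
    by blast
  have "trace_inv S \<le> B - trace_inv S + trace_inv (insert u S)" if u: "u \<in> ?T" for u
  proof -
    have "trace_inv S \<le> trace_inv (S \<union> {u} - {s})"
      using swap_opt s u unfolding swap_optimal_def by blast
    also have "S \<union> {u} - {s} = insert u ?A"
      using u s by auto
    finally have "trace_inv S \<le> trace_inv (insert u ?A)" .
    moreover have "trace_inv S - trace_inv (insert u S) \<le> trace_inv ?A - trace_inv (insert u ?A)"
      using trace_inv_supermodular[OF A, of S u] u by auto
    moreover have "trace_inv ?A \<le> B"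
      using trace_inv_antimono[of "{v}" ?A] v B[of v] by auto
    ultimately show ?thesis
      by linarith
  qed
  then have "(\<Sum>u\<in>?T. trace_inv S) \<le> (\<Sum>u\<in>?T. B - trace_inv S + trace_inv (insert u S))"
    by (rule sum_mono)
  also have "\<dots> = ?m * B - ?m * trace_inv S + (\<Sum>u\<in>?T. trace_inv (insert u S))"
    by (simp only: sum.distrib sum_subtractf sum_constant)
  finally have "?m * trace_inv S \<le> ?m * B - ?m * trace_inv S + (\<Sum>u\<in>?T. trace_inv (insert u S))"
    by simp
  moreover have "trace_inv S - trace_inv (S \<union> ?T) \<le> ?m * trace_inv S - (\<Sum>u\<in>?T. trace_inv (insert u S))"
    using trace_inv_union_decrease_le[OF S Diff_disjoint] by (simp only: sum_subtractf sum_constant)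
  moreover have "trace_inv (S \<union> ?T) \<le> trace_inv Opt"
    using trace_inv_antimono[OF Opt, of "S \<union> ?T"] by auto
  moreover have "(?m + 1) * trace_inv S = ?m * trace_inv S + trace_inv S"
    by (simp add: distrib_right)
  ultimately show ?thesis
    by linarith
qed

lemma swap_optimal_approx:
  assumes card: "card S = k" and k: "1 \<le> k" and swap_opt: "swap_optimal S"
    and Opt: "Opt \<noteq> {}" "card Opt \<le> k" and B: "\<And>v. trace_inv {v} \<le> B"
  shows "trace_inv S / 2
    \<le> (1 - real (k - 1) / real (2 * k - 1)) * (trace_inv Opt / 2) + B * (real (k - 1) / real (2 * k - 1))"
proof (cases "k = 1")
  case True
  then obtain s where S: "S = {s}"
    using card card_1_singletonE by blast
  have "card Opt = 1"
    using Opt True by (simp add: le_Suc_eq)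
  then obtain u where "Opt = {u}"
    by (rule card_1_singletonE)
  then have "trace_inv S \<le> trace_inv Opt"
    using S swap_opt unfolding swap_optimal_def by (cases "u = s") (auto simp: insert_Diff_if)
  then show ?thesis
    using True by simp
next
  case False
  let ?m = "real (card (Opt - S))"
  have S: "S \<noteq> {}"
    using card k by auto
  then obtain v where "v \<in> S"
    by blast
  then have bound: "trace_inv S \<le> B"
    using trace_inv_antimono[of "{v}" S] B[of v] by auto
  have m: "?m \<le> real k"
    using card_mono[of Opt "Opt - S"] Opt by auto
  have swap: "(?m + 1) * trace_inv S \<le> ?m * B + trace_inv Opt"
    using False k card by (intro swap_optimal_bound swap_opt Opt B) auto
  have K: "2 \<le> real k"
    using False k by simp
  have "trace_inv S / 2 \<le> (1 - (real k - 1) / (2 * real k - 1)) * (trace_inv Opt / 2)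
      + B * ((real k - 1) / (2 * real k - 1))"
    by (rule swap_ratio_bound[OF K m trace_inv_nonneg[OF Opt(1)] trace_inv_nonneg[OF S] bound swap])
  moreover have "real (k - 1) = real k - 1" and "real (2 * k - 1) = 2 * real k - 1"
    using k by auto
  ultimately show ?thesis
    by simp
qed

end

lemma swap_step_card: "swap_step E \<kappa> S S' \<Longrightarrow> card S' = card S"
  unfolding swap_step_def by (auto simp: card_insert_disjoint)

lemma swap_output_card:
  assumes "swap_output E \<kappa> k S"
  shows "card S = k"
proof -
  obtain S0 where "(swap_step E \<kappa>)\<^sup>*\<^sup>* S0 S" and "card S0 = k"
    using assms unfolding swap_output_def by blast
  then show ?thesis
    by (induction rule: rtranclp_induct) (auto dest: swap_step_card)
qed

theorem theorem4:
  fixes E :: "'n::finite \<Rightarrow> 'n \<Rightarrow> bool" and \<kappa> :: "'n \<Rightarrow> real" and k :: nat and Ss :: "'n set"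
  assumes "undirected_graph E" and "connected_graph E"
    and "\<And>i. \<kappa> i > 0"
    and "k \<ge> 1"
    and "swap_output E \<kappa> k Ss"
  shows "Hval E \<kappa> Ss \<le>
     (1 - real (k - 1) / real (2 * k - 1)) * Min {Hval E \<kappa> S | S. S \<noteq> {} \<and> card S \<le> k}
     + Max {trace (matrix_inv (QS E \<kappa> {v})) | v. True} * (real (k - 1) / real (2 * k - 1))"
proof -
  interpret grounded_laplacian E \<kappa>
    using assms(1-3) by unfold_locales auto
  have card: "card Ss = k"
    using swap_output_card[OF assms(5)] .
  have Hval: "Hval E \<kappa> S = trace_inv S / 2" for S
    unfolding Hval_def trace_inv_def ..
  let ?H = "{Hval E \<kappa> S | S. S \<noteq> {} \<and> card S \<le> k}"
  have "Ss \<noteq> {}"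
    using card assms(4) by auto
  with card have "Hval E \<kappa> Ss \<in> ?H"
    by auto
  then have "Min ?H \<in> ?H"
    by (intro Min_in finite_image_set) auto
  then obtain Opt where Opt: "Opt \<noteq> {}" "card Opt \<le> k" and Min: "Min ?H = trace_inv Opt / 2"
    unfolding Hval by auto
  have Max: "trace_inv {v} \<le> Max {trace (matrix_inv (QS E \<kappa> {v})) | v. True}" for v
    unfolding trace_inv_def by (rule Max_ge[OF finite_image_set]) auto
  show ?thesis
    unfolding Hval Min[unfolded Hval]
    by (rule swap_optimal_approx[OF card assms(4) swap_output_swap_optimal[OF assms(5)] Opt Max])
qed

end
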